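(* Let $l_1,l_2,l_3$ be affine functions on $\mathbb{F}_{p^r}$ with $l_1$ and $l_2$ permutations, write $l_2(x)=L_2(x)+c_2$ with $L_2$ additive, and let $d(x)$ be a Dembowski–Ostrom polynomial over $\mathbb{F}_{p^r}$. If $A(x)$ is an Alltop polynomial on $\mathbb{F}_{p^r}$ and $A'(x)=l_1(A(l_2(x)))+d(x)+l_3(x)$, then $A'(x)$ is an Alltop polynomial, and for every $a\in\mathbb{F}_{p^r}^*$ there exists $b\in\mathbb{F}_{p^r}^*$ (namely $b$ with $L_2(b)=a$) such that $\Delta_{A,a}(x)$ is EA-equivalent to $\Delta_{A',b}(x)$.
   Context: For $f:\mathbb{F}_{p^r}\to\mathbb{F}_{p^r}$ and $a\in\mathbb{F}_{p^r}$, $\Delta_{f,a}(x)=f(x+a)-f(x)$. A function $f$ is planar if for every $a\in\mathbb{F}_{p^r}^*$ the map $x\mapsto\Delta_{f,a}(x)$ is a bijection; $A$ is an Alltop polynomial if $\Delta_{A,a}$ is planar for every $a\in\mathbb{F}_{p^r}^*$. A function $L$ is additive if $L(x+y)=L(x)+L(y)$; an affine function is an additive function plus a constant. A Dembowski–Ostrom polynomial is one of the form $\sum_{i,j=0}^{r-1}a_{ij}x^{p^i+p^j}$, $a_{ij}\in\mathbb{F}_{p^r}$. Two functions $f_1,f_2$ are EA-equivalent if there exist affine $m_1,m_2,m_3$ with $m_1,m_2$ permutations such that $f_1=m_1\circ f_2\circ m_2+m_3$. *)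

theory Defs
  imports Main "HOL-Computational_Algebra.Primes" "HOL-Library.Cardinality"
begin

text \<open>The finite field F_{p^r} is modelled as a type 'a of class field and finite
  with CARD('a) = p^r, p prime.\<close>

definition delta :: "('a::ab_group_add \<Rightarrow> 'a) \<Rightarrow> 'a \<Rightarrow> 'a \<Rightarrow> 'a" where
  "delta f a = (\<lambda>x. f (x + a) - f x)"

definition planar :: "('a::ab_group_add \<Rightarrow> 'a) \<Rightarrow> bool" where
  "planar f \<longleftrightarrow> (\<forall>a. a \<noteq> 0 \<longrightarrow> bij (delta f a))"

definition alltop :: "('a::ab_group_add \<Rightarrow> 'a) \<Rightarrow> bool" where
  "alltop A \<longleftrightarrow> (\<forall>a. a \<noteq> 0 \<longrightarrow> planar (delta A a))"

definition additive :: "('a::plus \<Rightarrow> 'a) \<Rightarrow> bool" where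
  "additive L \<longleftrightarrow> (\<forall>x y. L (x + y) = L x + L y)"

definition affine_fun :: "('a::plus \<Rightarrow> 'a) \<Rightarrow> bool" where
  "affine_fun m \<longleftrightarrow> (\<exists>L c. additive L \<and> m = (\<lambda>x. L x + c))"

definition DO_poly :: "nat \<Rightarrow> nat \<Rightarrow> ('a::comm_ring_1 \<Rightarrow> 'a) \<Rightarrow> bool" where
  "DO_poly p r d \<longleftrightarrow> (\<exists>coef :: nat \<Rightarrow> nat \<Rightarrow> 'a.
      d = (\<lambda>x. \<Sum>i<r. \<Sum>j<r. coef i j * x ^ (p ^ i + p ^ j)))"

definition EA_equiv :: "('a::plus \<Rightarrow> 'a) \<Rightarrow> ('a \<Rightarrow> 'a) \<Rightarrow> bool" where
  "EA_equiv f1 f2 \<longleftrightarrow> (\<exists>m1 m2 m3. affine_fun m1 \<and> affine_fun m2 \<and> affine_fun m3 \<and>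
      bij m1 \<and> bij m2 \<and> f1 = (\<lambda>x. m1 (f2 (m2 x)) + m3 x))"

end

theory Submission
  imports Defs
begin

text \<open>Write A' = l1 \<circ> A \<circ> l2 + g with g = d + l3. In characteristic p the Frobenius
  powers x \<mapsto> x^(p^i) are additive, so every derivative of the Dembowski--Ostrom part d,
  hence of g, is affine, while the derivative of l1 \<circ> A \<circ> l2 in direction b is
  L1 \<circ> \<Delta>_{A,L2(b)} \<circ> l2. Thus \<Delta>_{A',b} is EA-equivalent to \<Delta>_{A,L2(b)}.
  EA-equivalence is symmetric, and differentiating an EA-equivalence once more shows that
  planarity is EA-invariant; since L2 is a bijection fixing 0, both claims follow.\<close>

lemma of_nat_CARD_eq_0: "of_nat CARD('a::{field,finite}) = (0::'a)"
proof -
  have "(\<Sum>x\<in>UNIV. (x::'a) + 1) = (\<Sum>x\<in>(\<lambda>x. x + 1) ` UNIV. x)"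
    by (subst sum.reindex) (auto simp: inj_def)
  also have "(\<lambda>x::'a. x + 1) ` UNIV = UNIV"
    by (auto intro!: image_eqI[where x="_ - 1"])
  finally show ?thesis by (simp add: sum.distrib)
qed

lemma CHAR_eq_prime_if_CARD_eq_power:
  assumes "prime p" and "CARD('a::{field,finite}) = p ^ r"
  shows "CHAR('a) = p"
proof -
  have prime_CHAR: "prime CHAR('a)"
    using prime_CHAR_semidom[where 'a='a] finite_imp_CHAR_pos[where 'a='a] by auto
  have "CHAR('a) dvd p ^ r"
    using of_nat_CARD_eq_0[where 'a='a] assms(2) of_nat_eq_0_iff_char_dvd by metis
  then show ?thesis
    using prime_CHAR assms(1) prime_dvd_power primes_dvd_imp_eq by blast
qed

lemma additive_0: "additive L \<Longrightarrow> L (0::'a::ab_group_add) = 0"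
  unfolding additive_def by (metis add.right_neutral add_left_imp_eq)

lemma additive_diff: "additive L \<Longrightarrow> L ((x::'a::ab_group_add) - y) = L x - L y"
  unfolding additive_def by (metis add_diff_cancel eq_diff_eq)

lemma additive_inv:
  assumes "additive L" and "bij (L::'a::ab_group_add \<Rightarrow> 'a)"
  shows "additive (inv L)"
  unfolding additive_def
proof (intro allI)
  fix x y
  have "L (inv L x + inv L y) = x + y"
    using assms by (simp add: additive_def bij_is_surj surj_f_inv_f)
  then show "inv L (x + y) = inv L x + inv L y"
    using assms(2) by (metis bij_inv_eq_iff)
qed

lemma additive_eq_0_iff:
  assumes "additive L" and "inj (L::'a::ab_group_add \<Rightarrow> 'a)"
  shows "L x = 0 \<longleftrightarrow> x = 0"
  using assms additive_0 by (metis injD)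

lemma bij_translate_imp_bij:
  assumes "bij (\<lambda>x. L x + (c::'a::ab_group_add))"
  shows "bij L"
proof -
  have "L = (\<lambda>y. y + - c) \<circ> (\<lambda>x. L x + c)" by auto
  then show ?thesis using assms bij_comp bij_plus_right by metis
qed

lemma affine_funE:
  assumes "affine_fun m"
  obtains L c where "additive L" and "m = (\<lambda>x. L x + c)"
  using assms unfolding affine_fun_def by blast

lemma affine_funI: "additive L \<Longrightarrow> affine_fun (\<lambda>x. L x + c)"
  unfolding affine_fun_def by blast

lemma additive_imp_affine_fun: "additive (L::'a::monoid_add \<Rightarrow> 'a) \<Longrightarrow> affine_fun L"
  using affine_funI[of L 0] by simp

lemma affine_fun_comp:
  assumes "affine_fun f" and "affine_fun (g::'a::ab_group_add \<Rightarrow> 'a)"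
  shows "affine_fun (f \<circ> g)"
proof -
  obtain L c where f: "additive L" "f = (\<lambda>x. L x + c)" using assms(1) by (rule affine_funE)
  obtain M e where g: "additive M" "g = (\<lambda>x. M x + e)" using assms(2) by (rule affine_funE)
  have "f \<circ> g = (\<lambda>x. L (M x) + (L e + c))"
    using f g by (auto simp: additive_def)
  moreover have "additive (\<lambda>x. L (M x))" using f g by (simp add: additive_def)
  ultimately show ?thesis by (metis affine_funI)
qed

lemma affine_fun_add:
  assumes "affine_fun f" and "affine_fun (g::'a::ab_semigroup_add \<Rightarrow> 'a)"
  shows "affine_fun (\<lambda>x. f x + g x)"
proof -
  obtain L c where f: "additive L" "f = (\<lambda>x. L x + c)" using assms(1) by (rule affine_funE)
  obtain M e where g: "additive M" "g = (\<lambda>x. M x + e)" using assms(2) by (rule affine_funE)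
  have "(\<lambda>x. f x + g x) = (\<lambda>x. (L x + M x) + (c + e))"
    using f g by (simp add: ac_simps)
  moreover have "additive (\<lambda>x. L x + M x)"
    using f g by (simp add: additive_def ac_simps)
  ultimately show ?thesis by (metis affine_funI)
qed

lemma affine_fun_inv:
  assumes "affine_fun m" and "bij (m::'a::ab_group_add \<Rightarrow> 'a)"
  shows "affine_fun (inv m)"
proof -
  obtain L c where m: "additive L" "m = (\<lambda>x. L x + c)" using assms(1) by (rule affine_funE)
  have L: "bij L" using assms(2) m(2) bij_translate_imp_bij by blast
  have "inv m = (\<lambda>y. inv L y + - inv L c)"
  proof
    fix y
    have "m (inv L y + - inv L c) = y"
      using additive_diff[OF m(1), of "inv L y" "inv L c"] L
      by (simp add: m(2) bij_is_surj surj_f_inv_f)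
    then show "inv m y = inv L y + - inv L c"
      using assms(2) by (metis bij_inv_eq_iff)
  qed
  then show ?thesis using affine_funI[OF additive_inv[OF m(1) L], of "- inv L c"] by simp
qed

lemma delta_add:
  "delta (\<lambda>x. f x + g x) a = (\<lambda>x. delta f a x + delta (g::'a::ab_group_add \<Rightarrow> 'a) a x)"
  unfolding delta_def by (simp add: algebra_simps)

lemma delta_const: "delta (\<lambda>_. c) a = (\<lambda>_. 0 :: 'a::ab_group_add)"
  unfolding delta_def by simp

lemma delta_additive:
  assumes "additive (L::'a::ab_group_add \<Rightarrow> 'a)"
  shows "delta L a = (\<lambda>_. L a)"
  using assms unfolding delta_def additive_def by simp

lemma affine_fun_delta_affine:
  assumes "affine_fun (l::'a::ab_group_add \<Rightarrow> 'a)"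
  shows "affine_fun (delta l a)"
proof -
  obtain L c where L: "additive L" and l: "l = (\<lambda>x. L x + c)" using assms by (rule affine_funE)
  have "delta l a = (\<lambda>_. L a)"
    by (simp add: l delta_add delta_const delta_additive[OF L])
  moreover have "affine_fun (\<lambda>_::'a. L a)"
    using affine_funI[of "\<lambda>_. 0" "L a"] by (simp add: additive_def)
  ultimately show ?thesis by simp
qed

lemma delta_comp_additive:
  assumes "additive M1" and "additive (M2::'a::ab_group_add \<Rightarrow> 'a)"
  shows "delta (\<lambda>x. M1 (g (M2 x + e))) c = (\<lambda>x. M1 (delta g (M2 c) (M2 x + e)))"
proof
  fix x
  show "delta (\<lambda>x. M1 (g (M2 x + e))) c x = M1 (delta g (M2 c) (M2 x + e))"
    using assms(2) by (simp add: delta_def additive_diff[OF assms(1)] additive_def ac_simps)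
qed

text \<open>By the freshman's dream each monomial x^(p^i + p^j) = x^(p^i) x^(p^j) is a
  product of two additive maps, so its derivative is additive plus a constant.\<close>

lemma affine_fun_delta_DO_poly:
  assumes "prime CHAR('a)" and "DO_poly CHAR('a) r (d::'a::comm_ring_1 \<Rightarrow> 'a)"
  shows "affine_fun (delta d b)"
proof -
  let ?q = "\<lambda>i. CHAR('a) ^ i"
  obtain coef where d: "d = (\<lambda>x. \<Sum>i<r. \<Sum>j<r. coef i j * x ^ (?q i + ?q j))"
    using assms(2) unfolding DO_poly_def by blast
  define M where "M = (\<lambda>x. \<Sum>i<r. \<Sum>j<r.
    coef i j * (x ^ ?q i * b ^ ?q j + b ^ ?q i * x ^ ?q j))"
  define e where "e = (\<Sum>i<r. \<Sum>j<r. coef i j * (b ^ ?q i * b ^ ?q j))"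
  have frobenius: "(x + y) ^ ?q i = x ^ ?q i + y ^ ?q i" for x y :: 'a and i
    using freshmans_dream'[OF assms(1)] by blast
  have "additive M"
    unfolding additive_def M_def by (simp add: frobenius algebra_simps sum.distrib)
  moreover have "delta d b = (\<lambda>x. M x + e)"
    unfolding delta_def d M_def e_def fun_eq_iff
    by (simp add: power_add frobenius algebra_simps sum.distrib flip: sum_subtractf)
  ultimately show ?thesis by (metis affine_funI)
qed

lemma EA_equiv_sym:
  assumes "EA_equiv f (g::'a::ab_group_add \<Rightarrow> 'a)"
  shows "EA_equiv g f"
proof -
  obtain m1 m2 m3 where m: "affine_fun m1" "affine_fun m2" "affine_fun m3" "bij m1" "bij m2"
    and f: "f = (\<lambda>x. m1 (g (m2 x)) + m3 x)"
    using assms unfolding EA_equiv_def by blast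
  obtain M1 c1 where m1: "additive M1" "m1 = (\<lambda>x. M1 x + c1)" using m(1) by (rule affine_funE)
  have M1: "bij M1" using m(4) m1(2) bij_translate_imp_bij by blast
  have inv_m1: "inv m1 (m1 u + w) = u + inv M1 w" for u w
  proof -
    have "m1 u + w = m1 (u + inv M1 w)"
      using m1 M1 by (simp add: additive_def bij_is_surj surj_f_inv_f ac_simps)
    then show ?thesis using m(4) by (simp add: bij_is_inj)
  qed
  define n3 where "n3 = (\<lambda>y. - inv M1 y) \<circ> m3 \<circ> inv m2"
  have "additive (\<lambda>y. - inv M1 y)"
    using additive_inv[OF m1(1) M1] by (simp add: additive_def)
  then have "affine_fun n3"
    unfolding n3_def
    by (rule affine_fun_comp[OF affine_fun_comp[OF additive_imp_affine_fun m(3)]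
          affine_fun_inv[OF m(2,5)]])
  moreover have "g = (\<lambda>y. inv m1 (f (inv m2 y)) + n3 y)"
    using m(5) inv_m1 by (simp add: f n3_def bij_is_surj surj_f_inv_f)
  ultimately show ?thesis
    unfolding EA_equiv_def
    using affine_fun_inv[OF m(1,4)] affine_fun_inv[OF m(2,5)]
      bij_imp_bij_inv[OF m(4)] bij_imp_bij_inv[OF m(5)] by blast
qed

lemma planar_EA_equiv:
  assumes "EA_equiv f (g::'a::ab_group_add \<Rightarrow> 'a)" and "planar g"
  shows "planar f"
  unfolding planar_def
proof (intro allI impI)
  fix c :: 'a assume "c \<noteq> 0"
  obtain m1 m2 m3 where m: "affine_fun m1" "affine_fun m2" "affine_fun m3" "bij m1" "bij m2"
    and f: "f = (\<lambda>x. m1 (g (m2 x)) + m3 x)"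
    using assms(1) unfolding EA_equiv_def by blast
  obtain M1 c1 where m1: "additive M1" "m1 = (\<lambda>x. M1 x + c1)" using m(1) by (rule affine_funE)
  obtain M2 c2 where m2: "additive M2" "m2 = (\<lambda>x. M2 x + c2)" using m(2) by (rule affine_funE)
  obtain M3 c3 where m3: "additive M3" "m3 = (\<lambda>x. M3 x + c3)" using m(3) by (rule affine_funE)
  have delta_f: "delta f c = (\<lambda>z. M1 z + M3 c) \<circ> delta g (M2 c) \<circ> m2"
    by (simp add: f m1 m2 m3 delta_add delta_const delta_additive[OF m3(1)]
        delta_comp_additive[OF m1(1) m2(1)] comp_def)
  have bij_outer: "bij (\<lambda>z. M1 z + M3 c)"
    using bij_comp[OF bij_translate_imp_bij[OF m(4)[unfolded m1(2)]] bij_plus_right]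
    by (simp add: comp_def)
  have "M2 c \<noteq> 0"
    using \<open>c \<noteq> 0\<close> additive_eq_0_iff[OF m2(1) bij_is_inj[OF bij_translate_imp_bij]] m(5) m2(2)
    by blast
  then have "bij (delta g (M2 c))" using assms(2) unfolding planar_def by blast
  then show "bij (delta f c)"
    unfolding delta_f using bij_comp[OF m(5) bij_comp[OF _ bij_outer]] by blast
qed

lemma EA_equiv_delta_comp_plus:
  assumes "affine_fun l1" and "bij l1"
    and "additive L2" and "bij (\<lambda>x. L2 x + c2)"
    and "affine_fun (delta g b)"
  shows "EA_equiv (delta (\<lambda>x. l1 (f (L2 x + c2)) + g x) b)
    (delta (f::'a::ab_group_add \<Rightarrow> 'a) (L2 b))"
proof -
  obtain L1 c1 where l1: "additive L1" "l1 = (\<lambda>x. L1 x + c1)" using assms(1) by (rule affine_funE)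
  have "delta (\<lambda>x. l1 (f (L2 x + c2)) + g x) b
    = (\<lambda>x. L1 (delta f (L2 b) (L2 x + c2)) + delta g b x)"
    by (simp add: l1 delta_add delta_const delta_comp_additive[OF l1(1) assms(3)])
  moreover have "bij L1" using assms(2) l1(2) bij_translate_imp_bij by blast
  ultimately show ?thesis
    unfolding EA_equiv_def
    using additive_imp_affine_fun[OF l1(1)] affine_funI[OF assms(3)] assms(4,5) by blast
qed

lemma alltop_comp_plus:
  assumes "alltop f" and "affine_fun l1" and "bij l1"
    and "additive L2" and "bij (\<lambda>x. L2 x + c2)"
    and "\<And>b. affine_fun (delta g b)"
  shows "alltop (\<lambda>x. l1 (f (L2 x + c2)) + (g x::'a::ab_group_add))"
  unfolding alltop_def
proof (intro allI impI)
  fix b :: 'a assume "b \<noteq> 0"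
  then have "L2 b \<noteq> 0"
    using additive_eq_0_iff[OF assms(4) bij_is_inj[OF bij_translate_imp_bij[OF assms(5)]]] by blast
  then have "planar (delta f (L2 b))" using assms(1) unfolding alltop_def by blast
  then show "planar (delta (\<lambda>x. l1 (f (L2 x + c2)) + g x) b)"
    by (rule planar_EA_equiv[OF EA_equiv_delta_comp_plus[OF assms(2-6)]])
qed

theorem lemma5:
  fixes p r :: nat
    and l1 l2 l3 L2 d A :: "'a::{field,finite} \<Rightarrow> 'a"
    and c2 :: 'a
  assumes "prime p" and "CARD('a) = p ^ r"
    and "affine_fun l1" and "affine_fun l2" and "affine_fun l3"
    and "bij l1" and "bij l2"
    and "additive L2" and "l2 = (\<lambda>x. L2 x + c2)"
    and "DO_poly p r d"
    and "alltop A"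
  shows "alltop (\<lambda>x. l1 (A (l2 x)) + d x + l3 x) \<and>
    (\<forall>a. a \<noteq> 0 \<longrightarrow> (\<exists>b. b \<noteq> 0 \<and> L2 b = a \<and>
       EA_equiv (delta A a) (delta (\<lambda>x. l1 (A (l2 x)) + d x + l3 x) b)))"
proof -
  have "CHAR('a) = p" using assms(1,2) by (rule CHAR_eq_prime_if_CARD_eq_power)
  then have delta_d: "affine_fun (delta d b)" for b
    using assms(1,10) affine_fun_delta_DO_poly by metis
  have delta_g: "affine_fun (delta (\<lambda>x. d x + l3 x) b)" for b
    unfolding delta_add by (rule affine_fun_add[OF delta_d affine_fun_delta_affine[OF assms(5)]])
  have A': "(\<lambda>x. l1 (A (l2 x)) + d x + l3 x) = (\<lambda>x. l1 (A (L2 x + c2)) + (d x + l3 x))"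
    by (simp add: assms(9) add.assoc)
  have bij_l2: "bij (\<lambda>x. L2 x + c2)" using assms(7,9) by simp
  then have bij_L2: "bij L2" by (rule bij_translate_imp_bij)
  have "\<exists>b. b \<noteq> 0 \<and> L2 b = a \<and> EA_equiv (delta A a) (delta (\<lambda>x. l1 (A (l2 x)) + d x + l3 x) b)"
    if "a \<noteq> 0" for a
  proof (intro exI conjI)
    show L2_inv: "L2 (inv L2 a) = a" using bij_L2 by (simp add: bij_is_surj surj_f_inv_f)
    then show "inv L2 a \<noteq> 0" using \<open>a \<noteq> 0\<close> assms(8) additive_0 by metis
    show "EA_equiv (delta A a) (delta (\<lambda>x. l1 (A (l2 x)) + d x + l3 x) (inv L2 a))"
      unfolding A'
      using EA_equiv_delta_comp_plus[OF assms(3,6,8) bij_l2 delta_g, where f=A and b="inv L2 a"]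
      by (simp add: L2_inv EA_equiv_sym)
  qed
  moreover have "alltop (\<lambda>x. l1 (A (l2 x)) + d x + l3 x)"
    unfolding A' by (rule alltop_comp_plus[OF assms(11,3,6,8) bij_l2 delta_g])
  ultimately show ?thesis by blast
qed

end
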